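(* Fix $\epsilon>0$, $\psi$ as in the context, and $\eta>0$ small enough that for $\lambda\in P(\epsilon,\eta)$ the cuts of $h_\lambda$ lie outside the closed unit disk. There is a constant $C$, depending only on $p,\epsilon,\psi,\eta$, such that for all $R>1$ and all $\lambda\in P(\epsilon,\eta)$, $$\oint_{\Gamma_R}|g_\lambda(u)|\,\Big(\frac{1}{1+|u|}\Big)^{2+\frac1p}\,|du|\le C\,|\lambda|^{\frac1{4p^2}}.$$
   Context: Fix an integer $p\ge2$. Let $T_p(z)$ be the Fuss–Catalan function: the unique solution of $zT^p-T+1=0$ analytic on $\mathbb C\setminus[(p-1)^{p-1}/p^p,\infty)$ with $T_p(0)=1$. Square roots are principal branches. For $\lambda\in\mathbb C$ set $f_\lambda(u)=\sqrt{T_p(-\lambda u^{2p-2})}$, $h_\lambda(u)=uf_\lambda(u)$ and $g_\lambda(u)=h_\lambda(u)-u$. For $\epsilon,\eta>0$ let $P(\epsilon,\eta)=\{\lambda\in\mathbb C:0<|\lambda|<\eta,\ |\arg\lambda|<\pi-\epsilon\}$. The function $h_\lambda$ is analytic away from cuts lying on the rays $\arg u=\frac{\pi-\arg\lambda}{2p-2}+\frac{k\pi}{p-1}$ ($k=-p+2,\dots,p-1$), at $|u|\ge|\lambda|^{-1/(2p-2)}(p-1)^{1/2}p^{-p/(2p-2)}$. Fix an angle $\psi\in(0,\pi/4)$, small enough (depending on $\epsilon,p$) that for every $\lambda$ with $|\arg\lambda|\le\pi-\epsilon$ these rays avoid the double sector $\{|\arg u|\le\psi\}\cup\{|\arg(-u)|\le\psi\}$.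 For $R>1$, the keyhole contour $\Gamma_R$ is the positively oriented boundary of $$D_R=\{|u|<R\}\cap\big(\{|u|<1\}\cup\{|\arg u|<\psi\}\cup\{|\arg(-u)|<\psi\}\big).$$ *)

theory Defs
  imports "HOL-Complex_Analysis.Complex_Analysis"
begin

definition FC_dom :: "nat \<Rightarrow> complex set" where
  "FC_dom p = - {complex_of_real x | x. x \<ge> real (p - 1) ^ (p - 1) / real p ^ p}"

text \<open>The Fuss--Catalan function T_p: the unique solution of z T^p - T + 1 = 0 analytic
  on FC_dom p with T_p(0) = 1 (set to 0 off the domain, to make the choice unique).\<close>
definition FussCatalan :: "nat \<Rightarrow> complex \<Rightarrow> complex" where
  "FussCatalan p = (THE T. T holomorphic_on FC_dom p \<and> T 0 = 1 \<and>
      (\<forall>z\<in>FC_dom p. z * T z ^ p - T z + 1 = 0) \<and>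
      (\<forall>z. z \<notin> FC_dom p \<longrightarrow> T z = 0))"

definition f_lam :: "nat \<Rightarrow> complex \<Rightarrow> complex \<Rightarrow> complex" where
  "f_lam p lam u = csqrt (FussCatalan p (- lam * u ^ (2 * p - 2)))"

definition h_lam :: "nat \<Rightarrow> complex \<Rightarrow> complex \<Rightarrow> complex" where
  "h_lam p lam u = u * f_lam p lam u"

definition g_lam :: "nat \<Rightarrow> complex \<Rightarrow> complex \<Rightarrow> complex" where
  "g_lam p lam u = h_lam p lam u - u"

definition Pset :: "real \<Rightarrow> real \<Rightarrow> complex set" where
  "Pset \<epsilon> \<eta> = {lam. 0 < cmod lam \<and> cmod lam < \<eta> \<and> \<bar>Arg lam\<bar> < pi - \<epsilon>}"

text \<open>Modulus at which the cuts of h_lambda start.\<close>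
definition cut_radius :: "nat \<Rightarrow> complex \<Rightarrow> real" where
  "cut_radius p lam = cmod lam powr (- 1 / (2 * real p - 2)) * sqrt (real p - 1)
                      * real p powr (- real p / (2 * real p - 2))"

text \<open>The admissibility condition on psi: the cut rays avoid the closed double sector.\<close>
definition psi_ok :: "nat \<Rightarrow> real \<Rightarrow> real \<Rightarrow> bool" where
  "psi_ok p \<epsilon> \<psi> \<longleftrightarrow> 0 < \<psi> \<and> \<psi> < pi / 4 \<and>
     (\<forall>lam. lam \<noteq> 0 \<and> \<bar>Arg lam\<bar> \<le> pi - \<epsilon> \<longrightarrow>
       (\<forall>k::int. - int p + 2 \<le> k \<and> k \<le> int p - 1 \<longrightarrow>
         (\<forall>r::real. r > 0 \<longrightarrow>
           (let u = complex_of_real r * cis ((pi - Arg lam) / (2 * real p - 2) + real_of_int k * pi / (real p - 1))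
            in \<not> (\<bar>Arg u\<bar> \<le> \<psi> \<or> \<bar>Arg (- u)\<bar> \<le> \<psi>)))))"

text \<open>Positively oriented keyhole boundary of D_R.\<close>
definition keyhole :: "real \<Rightarrow> real \<Rightarrow> real \<Rightarrow> complex" where
  "keyhole \<psi> R =
     linepath (cis (- \<psi>)) (of_real R * cis (- \<psi>)) +++
     part_circlepath 0 R (- \<psi>) \<psi> +++
     linepath (of_real R * cis \<psi>) (cis \<psi>) +++
     part_circlepath 0 1 \<psi> (pi - \<psi>) +++
     linepath (cis (pi - \<psi>)) (of_real R * cis (pi - \<psi>)) +++
     part_circlepath 0 R (pi - \<psi>) (pi + \<psi>) +++
     linepath (of_real R * cis (pi + \<psi>)) (cis (pi + \<psi>)) +++
     part_circlepath 0 1 (pi + \<psi>) (2 * pi - \<psi>)"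

definition arclength_integral :: "(complex \<Rightarrow> real) \<Rightarrow> (real \<Rightarrow> complex) \<Rightarrow> real" where
  "arclength_integral F \<gamma> =
     integral {0..1} (\<lambda>t. F (\<gamma> t) * norm (vector_derivative \<gamma> (at t)))"

end

(* On the slit plane, 1/T_p(z) is the root of largest modulus of w^(p-1) (1 - w) = z: this root
   is unique, hence continuous and holomorphic, and has modulus at least 1/2.  So |T_p| <= 2 and
   T_p - 1 = z T_p^p, which gives |sqrt T_p(z) - 1| <= A min(|z|, 1) <= A |z|^(1/(4p^2)) and
   |g(u)| (1 + |u|)^(-2-1/p) <= A |lambda|^(1/(4p^2)) (1 + |u|)^(-1-e), e = (p+1)/(2p^2).
   Along each radial segment of the keyhole this majorant has arc-length integral at most 1/e,
   along each circular arc at most the angle of the arc, uniformly in R. *)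

theory Submission
  imports Defs "HOL-Computational_Algebra.Fundamental_Theorem_Algebra"
begin

lemma norm_prod_mset_diff_ge:
  fixes a :: complex
  assumes "\<forall>x\<in>#A. m \<le> norm (a - x)" and "0 \<le> m"
  shows "m ^ size A \<le> norm (\<Prod>x\<in>#A. a - x)"
  using assms
proof (induction A)
  case (add x A)
  then have "m * m ^ size A \<le> norm (a - x) * norm (\<Prod>x\<in>#A. a - x)"
    by (intro mult_mono) auto
  then show ?case by (simp add: norm_mult)
qed simp

lemma norm_prod_mset_diff_le:
  fixes a :: complex
  assumes "\<forall>x\<in>#A. norm (a - x) \<le> m"
  shows "norm (\<Prod>x\<in>#A. a - x) \<le> m ^ size A"
  using assms
proof (induction A)
  case (add x A)
  then have "norm (a - x) * norm (\<Prod>x\<in>#A. a - x) \<le> m * m ^ size A"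
    by (intro mult_mono) (auto intro: order_trans[OF norm_ge_zero])
  then show ?case by (simp add: norm_mult)
qed simp

lemma poly_monic_eq_prod_proots:
  fixes P :: "complex poly"
  assumes "lead_coeff P = 1"
  shows "poly P a = (\<Prod>x\<in>#proots P. a - x)"
proof -
  have "poly P a = poly (smult (lead_coeff P) (\<Prod>x\<in>#proots P. [:-x, 1:])) a"
    by (subst complex_poly_decompose_multiset) simp
  then show ?thesis using assms by (simp add: poly_prod_mset)
qed

lemma monic_poly_root_near:
  fixes P :: "complex poly"
  assumes monic: "lead_coeff P = 1" and deg: "degree P > 0"
  obtains r where "poly P r = 0" "norm (a - r) ^ degree P \<le> norm (poly P a)"
proof -
  define A where "A = proots P"
  have "P \<noteq> 0" using monic by auto
  then have size: "size A = degree P" and roots: "set_mset A = {r. poly P r = 0}"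
    unfolding A_def by (simp_all add: size_proots_complex)
  then have ne: "set_mset A \<noteq> {}"
    using deg by (metis gr_implies_not0 set_mset_eq_empty_iff size_empty)
  define m where "m = Min ((\<lambda>x. norm (a - x)) ` set_mset A)"
  have "m \<in> (\<lambda>x. norm (a - x)) ` set_mset A" unfolding m_def using ne by (intro Min_in) auto
  then obtain r where r: "r \<in># A" "m = norm (a - r)" by auto
  have "\<forall>x\<in>#A. m \<le> norm (a - x)" unfolding m_def by auto
  then have "m ^ size A \<le> norm (\<Prod>x\<in>#A. a - x)" by (rule norm_prod_mset_diff_ge) (simp add: r)
  with r that show ?thesis
    using roots size poly_monic_eq_prod_proots[OF monic, of a] by (simp add: A_def)
qed

lemma abs_Im_power_le:
  fixes w :: complex
  shows "\<bar>Im (w ^ Suc n)\<bar> \<le> real (Suc n) * norm w ^ n * \<bar>Im w\<bar>"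
proof (induction n)
  case (Suc n)
  have "Im (w ^ Suc (Suc n)) = Re (w ^ Suc n) * Im w + Im (w ^ Suc n) * Re w"
    by (simp add: algebra_simps)
  also have "\<bar>\<dots>\<bar> \<le> \<bar>Re (w ^ Suc n)\<bar> * \<bar>Im w\<bar> + \<bar>Im (w ^ Suc n)\<bar> * \<bar>Re w\<bar>"
    by (simp add: abs_mult[symmetric] abs_triangle_ineq)
  also have "\<dots> \<le> norm w ^ Suc n * \<bar>Im w\<bar> + (real (Suc n) * norm w ^ n * \<bar>Im w\<bar>) * norm w"
    using abs_Re_le_cmod[of "w ^ Suc n"] abs_Re_le_cmod[of w]
    by (intro add_mono mult_mono Suc.IH) (auto simp: norm_power simp del: power_Suc)
  also have "\<dots> = real (Suc (Suc n)) * norm w ^ Suc n * \<bar>Im w\<bar>" by (simp add: algebra_simps)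
  finally show ?case .
qed simp

lemma power_eq_power_pred_mult: "1 \<le> n \<Longrightarrow> (t::'a::comm_monoid_mult) ^ n = t ^ (n - 1) * t"
  by (metis Suc_diff_le diff_Suc_1 power_Suc2)

section \<open>The Fuss--Catalan function as a reciprocal root\<close>

text \<open>T solves z T^p - T + 1 = 0 iff w = 1/T solves w^(p-1) (1 - w) = z, i.e. is a root
  of fc_poly p z.\<close>

definition fc_poly :: "nat \<Rightarrow> complex \<Rightarrow> complex poly" where
  "fc_poly p z = [:z:] + monom 1 (p - 1) * [:-1, 1:]"

definition fc_branch_point :: "nat \<Rightarrow> real" where
  "fc_branch_point p = real (p - 1) ^ (p - 1) / real p ^ p"

lemma poly_fc_poly: "poly (fc_poly p z) w = z - w ^ (p - 1) * (1 - w)"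
  by (simp add: fc_poly_def poly_monom algebra_simps)

lemma fc_poly_root_iff: "poly (fc_poly p z) w = 0 \<longleftrightarrow> w ^ (p - 1) * (1 - w) = z"
  by (auto simp: poly_fc_poly)

lemma degree_fc_poly:
  assumes "p \<ge> 2"
  shows "degree (fc_poly p z) = p" "lead_coeff (fc_poly p z) = 1"
proof -
  have d: "degree (monom (1::complex) (p - 1) * [:-1, 1:]) = p"
    using assms by (subst degree_mult_eq) (auto simp: degree_monom_eq)
  show deg: "degree (fc_poly p z) = p"
    unfolding fc_poly_def using assms d by (subst degree_add_eq_right) auto
  obtain k where "p = Suc k" using assms by (cases p) auto
  then show "lead_coeff (fc_poly p z) = 1"
    unfolding deg by (simp add: coeff_mult fc_poly_def)
qed

lemma fc_poly_nonzero: "p \<ge> 2 \<Longrightarrow> fc_poly p z \<noteq> 0"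
  using degree_fc_poly(1)[of p z] by (metis degree_0 not_numeral_le_zero)

lemma fc_poly_roots_finite_nonempty:
  assumes "p \<ge> 2"
  shows "finite {w. poly (fc_poly p z) w = 0}" "{w. poly (fc_poly p z) w = 0} \<noteq> {}"
proof -
  show "finite {w. poly (fc_poly p z) w = 0}" using fc_poly_nonzero[OF assms] by (rule poly_roots_finite)
  show "{w. poly (fc_poly p z) w = 0} \<noteq> {}"
    using fundamental_theorem_of_algebra[of "fc_poly p z"] degree_fc_poly[OF assms] assms
    by (auto simp: constant_degree)
qed

lemma FC_dom_iff: "z \<in> FC_dom p \<longleftrightarrow> \<not> (Im z = 0 \<and> Re z \<ge> fc_branch_point p)"
  unfolding FC_dom_def fc_branch_point_def by (auto simp: complex_eq_iff)

lemma fc_branch_point_pos: "p \<ge> 2 \<Longrightarrow> fc_branch_point p > 0"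
  unfolding fc_branch_point_def by simp

lemma zero_in_FC_dom: "p \<ge> 2 \<Longrightarrow> 0 \<in> FC_dom p"
  using fc_branch_point_pos[of p] by (simp add: FC_dom_iff)

lemma open_FC_dom: "open (FC_dom p)"
proof -
  have "FC_dom p = - {z. Im z = 0 \<and> Re z \<ge> fc_branch_point p}"
    by (auto simp: FC_dom_iff)
  moreover have "closed {z. Im z = 0 \<and> Re z \<ge> fc_branch_point p}"
    by (intro closed_Collect_conj closed_Collect_eq closed_Collect_le) (auto intro!: continuous_intros)
  ultimately show ?thesis by (simp add: open_Compl)
qed

lemma starlike_FC_dom:
  assumes p: "p \<ge> 2"
  shows "starlike (FC_dom p)"
  unfolding starlike_def
proof (intro bexI[of _ 0] ballI subsetI)
  fix x y assume x: "x \<in> FC_dom p" and "y \<in> closed_segment 0 x"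
  then obtain u :: real where u: "0 \<le> u" "u \<le> 1" "y = u *\<^sub>R x"
    by (auto simp: closed_segment_def)
  show "y \<in> FC_dom p"
  proof (rule ccontr)
    assume "y \<notin> FC_dom p"
    then have y: "u * Im x = 0" "u * Re x \<ge> fc_branch_point p" using u by (auto simp: FC_dom_iff)
    then have "u > 0" "u * Re x > 0" using fc_branch_point_pos[OF p] u by (auto intro: neq_le_trans)
    then have "Im x = 0" "Re x \<ge> u * Re x"
      using y u by (auto simp: zero_less_mult_iff mult_left_le_one_le)
    then show False using x y by (simp add: FC_dom_iff)
  qed
qed (rule zero_in_FC_dom[OF p])

lemma fc_branch_point_eq:
  assumes "p \<ge> 2"
  shows "((real p - 1) / real p) ^ (p - 1) * (1 - (real p - 1) / real p) = fc_branch_point p"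
proof -
  have "((real p - 1) / real p) ^ (p - 1) * (1 - (real p - 1) / real p)
      = (real p - 1) ^ (p - 1) / (real p ^ (p - 1) * real p)"
    using assms by (simp add: power_divide field_simps)
  also have "real p ^ (p - 1) * real p = real p ^ p"
    using assms power_eq_power_pred_mult[of p "real p"] by simp
  finally show ?thesis using assms by (simp add: fc_branch_point_def of_nat_diff)
qed

lemma fc_roots_equal_modulus:
  assumes r1: "poly (fc_poly p z) w1 = 0" and r2: "poly (fc_poly p z) w2 = 0"
    and ne: "w1 \<noteq> w2" and eq: "norm w1 = norm w2"
  shows "Im w1 \<noteq> 0" "Im z = 0"
proof -
  have e1: "z = w1 ^ (p - 1) * (1 - w1)" and e2: "z = w2 ^ (p - 1) * (1 - w2)"
    using r1 r2 by (auto simp: fc_poly_root_iff)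
  have "norm w1 > 0" using ne eq by auto
  moreover have "norm w1 ^ (p - 1) * norm (1 - w1) = norm w1 ^ (p - 1) * norm (1 - w2)"
    by (metis e1 e2 eq norm_mult norm_power)
  ultimately have "norm (1 - w1) = norm (1 - w2)" by simp
  then have "(1 - Re w1)\<^sup>2 + (Im w1)\<^sup>2 = (1 - Re w2)\<^sup>2 + (Im w2)\<^sup>2"
    using cmod_power2[of "1 - w1"] cmod_power2[of "1 - w2"] by simp
  moreover have sq: "(Re w1)\<^sup>2 + (Im w1)\<^sup>2 = (Re w2)\<^sup>2 + (Im w2)\<^sup>2"
    using eq cmod_power2[of w1] cmod_power2[of w2] by simp
  ultimately have re: "Re w1 = Re w2" by (simp add: power2_eq_square algebra_simps)
  then have "Im w2 = Im w1 \<or> Im w2 = - Im w1" using sq by (auto simp: power2_eq_iff)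
  then have "w2 = cnj w1" and "Im w1 \<noteq> 0" using re ne by (auto simp: complex_eq_iff)
  moreover from this have "cnj z = z" using e1 e2 by simp
  ultimately show "Im w1 \<noteq> 0" "Im z = 0" by (auto simp: complex_eq_iff)
qed

lemma fc_nonpos_real_root:
  assumes p: "p \<ge> 2" and x: "x \<le> 0"
  obtains t :: real where "t \<ge> 1" "t ^ (p - 1) * (1 - t) = x"
proof -
  have "\<exists>t\<ge>1. t \<le> 2 - x \<and> t ^ p - t ^ (p - 1) = - x"
  proof (rule IVT')
    have "1 \<le> (2 - x) ^ (p - 1)" using x by (intro one_le_power) simp
    then have "1 * (1 - x) \<le> (2 - x) ^ (p - 1) * (1 - x)" by (rule mult_right_mono) (use x in simp)
    then show "- x \<le> (2 - x) ^ p - (2 - x) ^ (p - 1)"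
      using p power_eq_power_pred_mult[of p "2 - x"] by (simp add: algebra_simps)
  qed (use x in \<open>auto intro!: continuous_intros\<close>)
  then obtain t where t: "t \<ge> 1" "t ^ p - t ^ (p - 1) = - x" by auto
  moreover have "t ^ p = t ^ (p - 1) * t" using p by (intro power_eq_power_pred_mult) simp
  ultimately show ?thesis using that by (simp add: algebra_simps)
qed

text \<open>A nonreal root w with |w| \<ge> t has |1 - w| > |w| - 1 \<ge> t - 1, forcing
  |x| > t^(p-1) (t - 1) = |x|.\<close>

lemma fc_nonreal_roots_below_real_root_nonpos:
  assumes p: "p \<ge> 2" and x: "x \<le> 0"
  obtains t :: real where "poly (fc_poly p (of_real x)) (of_real t) = 0"
    "\<And>w. poly (fc_poly p (of_real x)) w = 0 \<Longrightarrow> Im w \<noteq> 0 \<Longrightarrow> norm w < t"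
proof -
  obtain t where t: "t \<ge> 1" "t ^ (p - 1) * (1 - t) = x" using fc_nonpos_real_root[OF p x] .
  then have t_root: "(of_real t :: complex) ^ (p - 1) * (1 - of_real t) = of_real x"
    by (metis of_real_1 of_real_diff of_real_mult of_real_power)
  have "norm w < t" if w: "w ^ (p - 1) * (1 - w) = of_real x" "Im w \<noteq> 0" for w
  proof (rule ccontr)
    assume "\<not> norm w < t"
    then have tw: "t \<le> norm w" by simp
    have "Re w < norm w"
      using w(2) cmod_power2[of w] by (smt (verit) abs_Re_le_cmod power2_eq_square abs_le_square_iff
          zero_less_power2 realpow_square_minus_le)
    then have "(norm w - 1)\<^sup>2 < (norm (1 - w))\<^sup>2"
      using cmod_power2[of "1 - w"] cmod_power2[of w] by (simp add: power2_eq_square algebra_simps)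
    then have "norm w - 1 < norm (1 - w)" by (smt (verit) norm_ge_zero power_mono)
    then have "t ^ (p - 1) * (t - 1) < norm w ^ (p - 1) * norm (1 - w)"
      using tw t(1) by (intro mult_le_less_imp_less power_mono) auto
    also have "\<dots> = - x" using arg_cong[OF w(1), of norm] x by (simp add: norm_mult norm_power)
    finally show False using t(2) by (simp add: algebra_simps)
  qed
  with t_root that show ?thesis by (simp add: fc_poly_root_iff)
qed

text \<open>Compare imaginary parts in x conj(w^(p-1)) = |w|^(2p-2) (1 - w) and use
  |Im w^(p-1)| \<le> (p-1) |w|^(p-2) |Im w|.\<close>

lemma fc_nonreal_root_power_le:
  assumes p: "p \<ge> 2" and x: "0 < x"
    and w: "w ^ (p - 1) * (1 - w) = of_real x" "Im w \<noteq> 0"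
  shows "norm w ^ p \<le> x * real (p - 1)"
proof -
  define \<rho> where "\<rho> = norm w"
  have \<rho>: "\<rho> > 0" using w(2) \<rho>_def by auto
  obtain n where n: "p - 1 = Suc n" using p by (cases "p - 1") auto
  have "of_real x * cnj (w ^ (p - 1)) = (w ^ (p - 1) * cnj (w ^ (p - 1))) * (1 - w)"
    unfolding w(1)[symmetric] by (simp only: mult_ac)
  also have "w ^ (p - 1) * cnj (w ^ (p - 1)) = of_real (\<rho> ^ (2 * (p - 1)))"
    unfolding complex_norm_square[symmetric] \<rho>_def by (simp add: norm_power power_mult[symmetric] mult.commute)
  finally have "Im (of_real x * cnj (w ^ (p - 1))) = Im (of_real (\<rho> ^ (2 * (p - 1))) * (1 - w))"
    by simp
  then have "x * Im (w ^ (p - 1)) = \<rho> ^ (2 * (p - 1)) * Im w"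
    by (simp flip: complex_cnj_power)
  then have "\<rho> ^ (2 * (p - 1)) * \<bar>Im w\<bar> = x * \<bar>Im (w ^ (p - 1))\<bar>"
    using x \<rho> by (metis abs_mult abs_of_pos zero_less_power)
  also have "\<dots> \<le> x * (real (Suc n) * \<rho> ^ n * \<bar>Im w\<bar>)"
    using abs_Im_power_le[of w n] x \<rho>_def n by (intro mult_left_mono) auto
  also have "\<rho> ^ (2 * (p - 1)) = \<rho> ^ n * \<rho> ^ p"
  proof -
    have "2 * (p - 1) = n + p" using n by simp
    then show ?thesis by (simp only: power_add)
  qed
  finally have "\<rho> ^ n * (\<rho> ^ p * \<bar>Im w\<bar>) \<le> \<rho> ^ n * (x * real (p - 1) * \<bar>Im w\<bar>)"
    using n by (simp add: algebra_simps)
  then show ?thesis using \<rho> w(2) \<rho>_def by simp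
qed

text \<open>For 0 < x below the branch point there is a real root t > (p-1)/p, whereas a nonreal
  root of modulus at least t would give t^p \<le> (p-1) x = (p-1) t^(p-1) (1 - t), i.e. t \<le> (p-1)/p.\<close>

lemma fc_nonreal_roots_below_real_root_pos:
  assumes p: "p \<ge> 2" and x: "0 < x" "x < fc_branch_point p"
  obtains t :: real where "poly (fc_poly p (of_real x)) (of_real t) = 0"
    "\<And>w. poly (fc_poly p (of_real x)) w = 0 \<Longrightarrow> Im w \<noteq> 0 \<Longrightarrow> norm w < t"
proof -
  define q where "q = (real p - 1) / real p"
  have q: "0 < q" "q < 1" using p unfolding q_def by auto
  have "\<exists>t\<ge>q. t \<le> 1 \<and> t ^ (p - 1) * (1 - t) = x"
    by (rule IVT2) (use q x fc_branch_point_eq[OF p] in \<open>auto simp: q_def intro!: continuous_intros\<close>)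
  then obtain t where t: "q \<le> t" "t \<le> 1" "t ^ (p - 1) * (1 - t) = x" by auto
  have "t \<noteq> q" using t(3) fc_branch_point_eq[OF p] x q_def by auto
  with t have tq: "q < t" by simp
  have "norm w < t" if w: "w ^ (p - 1) * (1 - w) = of_real x" "Im w \<noteq> 0" for w
  proof (rule ccontr)
    assume "\<not> norm w < t"
    then have "t ^ p \<le> norm w ^ p" using tq q by (intro power_mono) auto
    also have "\<dots> \<le> x * real (p - 1)" by (rule fc_nonreal_root_power_le[OF p x(1) w])
    finally have "t ^ (p - 1) * t \<le> x * real (p - 1)"
      using power_eq_power_pred_mult[of p t] p by simp
    then have "t ^ (p - 1) * t \<le> t ^ (p - 1) * ((1 - t) * real (p - 1))"
      unfolding t(3)[symmetric] by (simp only: mult.assoc)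
    then have "t \<le> (1 - t) * (real p - 1)" using q tq p by (simp add: of_nat_diff)
    then have "t \<le> q" unfolding q_def using p by (simp add: field_simps of_nat_diff)
    then show False using tq by simp
  qed
  moreover have "(of_real t :: complex) ^ (p - 1) * (1 - of_real t) = of_real x"
    using t(3) by (metis of_real_1 of_real_diff of_real_mult of_real_power)
  ultimately show ?thesis using that by (simp add: fc_poly_root_iff)
qed

lemma fc_nonreal_roots_below_real_root:
  assumes p: "p \<ge> 2" and z: "z \<in> FC_dom p" "Im z = 0"
  obtains t :: real where "poly (fc_poly p z) (of_real t) = 0"
    "\<And>w. poly (fc_poly p z) w = 0 \<Longrightarrow> Im w \<noteq> 0 \<Longrightarrow> norm w < t"
proof -
  have zx: "z = of_real (Re z)" using z(2) by (simp add: complex_eq_iff)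
  have "Re z < fc_branch_point p" using z by (simp add: FC_dom_iff)
  then show ?thesis
  proof (cases "Re z \<le> 0")
    case True
    show ?thesis using fc_nonreal_roots_below_real_root_nonpos[OF p True, folded zx] that by blast
  next
    case False
    then have "0 < Re z" by simp
    from fc_nonreal_roots_below_real_root_pos[OF p this \<open>Re z < fc_branch_point p\<close>, folded zx]
    show ?thesis using that by blast
  qed
qed

lemma max_modulus_root_exists:
  assumes "p \<ge> 2"
  obtains m where "poly (fc_poly p z) m = 0" "\<And>v. poly (fc_poly p z) v = 0 \<Longrightarrow> norm v \<le> norm m"
proof -
  define S where "S = {w. poly (fc_poly p z) w = 0}"
  have S: "finite S" "S \<noteq> {}" using fc_poly_roots_finite_nonempty[OF assms] S_def by auto
  then have "Max (norm ` S) \<in> norm ` S" by (intro Max_in) auto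
  then obtain m where "m \<in> S" "norm m = Max (norm ` S)" by auto
  with S that show ?thesis unfolding S_def by auto
qed

text \<open>Evaluate the factorisation over the roots at 0 and at 1: both values are z.\<close>

lemma max_modulus_root_ge_half:
  assumes p: "p \<ge> 2" and m: "\<And>v. poly (fc_poly p z) v = 0 \<Longrightarrow> norm v \<le> norm m"
  shows "norm m \<ge> 1 / 2"
proof (rule ccontr)
  assume "\<not> norm m \<ge> 1 / 2"
  then have small: "norm m < 1 / 2" by simp
  define A where "A = proots (fc_poly p z)"
  have nz: "fc_poly p z \<noteq> 0" and monic: "lead_coeff (fc_poly p z) = 1"
    using fc_poly_nonzero[OF p] degree_fc_poly[OF p] by auto
  have size: "size A = p" unfolding A_def using degree_fc_poly[OF p] by (simp add: size_proots_complex)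
  have inA: "norm x \<le> norm m" if "x \<in># A" for x using m that nz A_def by auto
  have "norm z \<le> norm m ^ p"
  proof -
    have "poly (fc_poly p z) 0 = z" using p by (simp add: poly_fc_poly power_0_left)
    then have "norm z = norm (\<Prod>x\<in>#A. 0 - x)"
      using poly_monic_eq_prod_proots[OF monic, of 0] A_def by simp
    also have "\<dots> \<le> norm m ^ size A" using inA by (intro norm_prod_mset_diff_le) auto
    finally show ?thesis using size by simp
  qed
  moreover have "(1 - norm m) ^ p \<le> norm z"
  proof -
    have "1 - norm m \<le> norm (1 - x)" if "x \<in># A" for x
      using inA[OF that] norm_triangle_ineq2[of 1 x] by simp
    then have "(1 - norm m) ^ size A \<le> norm (\<Prod>x\<in>#A. 1 - x)"
      using small by (intro norm_prod_mset_diff_ge) auto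
    also have "\<dots> = norm z"
      using poly_monic_eq_prod_proots[OF monic, of 1] A_def by (simp add: poly_fc_poly)
    finally show ?thesis using size by simp
  qed
  ultimately have "(1 - norm m) ^ Suc (p - 1) \<le> norm m ^ Suc (p - 1)" using p by simp
  then have "1 - norm m \<le> norm m" by (rule power_le_imp_le_base) simp
  then show False using small by simp
qed

definition is_dominant_root :: "nat \<Rightarrow> complex \<Rightarrow> complex \<Rightarrow> bool" where
  "is_dominant_root p z m \<longleftrightarrow> poly (fc_poly p z) m = 0 \<and>
     (\<forall>v. poly (fc_poly p z) v = 0 \<longrightarrow> v \<noteq> m \<longrightarrow> norm v < norm m)"

definition dominant_root :: "nat \<Rightarrow> complex \<Rightarrow> complex" where
  "dominant_root p z = (THE m. is_dominant_root p z m)"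

lemma is_dominant_root_unique: "is_dominant_root p z m \<Longrightarrow> is_dominant_root p z m' \<Longrightarrow> m = m'"
  unfolding is_dominant_root_def by (metis less_asym)

text \<open>Two roots of equal modulus force z to be real and the roots to be nonreal, but then
  a real root is larger still.\<close>

lemma is_dominant_root_exists:
  assumes p: "p \<ge> 2" and z: "z \<in> FC_dom p"
  shows "\<exists>m. is_dominant_root p z m"
proof -
  obtain m where m: "poly (fc_poly p z) m = 0" "\<And>v. poly (fc_poly p z) v = 0 \<Longrightarrow> norm v \<le> norm m"
    using max_modulus_root_exists[OF p] by blast
  have "norm v < norm m" if v: "poly (fc_poly p z) v = 0" "v \<noteq> m" for v
  proof (rule ccontr)
    assume "\<not> norm v < norm m"
    then have "norm m = norm v" using m(2)[OF v(1)] by simp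
    then have "Im m \<noteq> 0" "Im z = 0" using fc_roots_equal_modulus[OF m(1) v(1)] v(2) by auto
    with fc_nonreal_roots_below_real_root[OF p z] obtain t :: real
      where "poly (fc_poly p z) (of_real t) = 0" "norm m < t" using m(1) by metis
    then show False using m(2) by fastforce
  qed
  with m(1) show ?thesis unfolding is_dominant_root_def by blast
qed

lemma is_dominant_root_dominant_root:
  assumes "p \<ge> 2" and "z \<in> FC_dom p"
  shows "is_dominant_root p z (dominant_root p z)"
  unfolding dominant_root_def
  using is_dominant_root_exists[OF assms] is_dominant_root_unique by (metis theI)

lemma dominant_root:
  assumes p: "p \<ge> 2" and z: "z \<in> FC_dom p"
  shows "dominant_root p z ^ (p - 1) * (1 - dominant_root p z) = z"
    and "norm (dominant_root p z) \<ge> 1 / 2"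
    and "\<And>v. poly (fc_poly p z) v = 0 \<Longrightarrow> v \<noteq> dominant_root p z \<Longrightarrow>
           norm v < norm (dominant_root p z)"
proof -
  have M: "is_dominant_root p z (dominant_root p z)" by (rule is_dominant_root_dominant_root[OF p z])
  then show "dominant_root p z ^ (p - 1) * (1 - dominant_root p z) = z"
    "\<And>v. poly (fc_poly p z) v = 0 \<Longrightarrow> v \<noteq> dominant_root p z \<Longrightarrow>
       norm v < norm (dominant_root p z)"
    unfolding is_dominant_root_def fc_poly_root_iff by auto
  show "norm (dominant_root p z) \<ge> 1 / 2"
    using M unfolding is_dominant_root_def by (intro max_modulus_root_ge_half[OF p]) force
qed

lemma dominant_root_nonzero: "p \<ge> 2 \<Longrightarrow> z \<in> FC_dom p \<Longrightarrow> dominant_root p z \<noteq> 0"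
  using dominant_root(2)[of p z] by auto

lemma dominant_root_0:
  assumes p: "p \<ge> 2"
  shows "dominant_root p 0 = 1"
proof -
  have "is_dominant_root p 0 1"
    unfolding is_dominant_root_def fc_poly_root_iff by auto
  then show ?thesis
    using is_dominant_root_unique is_dominant_root_dominant_root[OF p zero_in_FC_dom[OF p]] by blast
qed

text \<open>If z moves by less than \<tau>^p, every root moves by less than \<tau> (monic_poly_root_near);
  once \<tau> is below a third of the modulus gap at z0, the dominant root can only follow
  the dominant root.\<close>

lemma continuous_at_dominant_root:
  assumes p: "p \<ge> 2" and z0: "z0 \<in> FC_dom p"
  shows "continuous (at z0) (dominant_root p)"
proof -
  define m0 where "m0 = dominant_root p z0"
  define others where "others = {w. poly (fc_poly p z0) w = 0} - {m0}"
  define gap where "gap = Min (insert 1 ((\<lambda>v. norm m0 - norm v) ` others))"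
  have fin: "finite others" using fc_poly_roots_finite_nonempty[OF p] others_def by auto
  have gap_pos: "gap > 0"
    unfolding gap_def using fin dominant_root(3)[OF p z0] by (subst Min_gr_iff) (auto simp: others_def m0_def)
  have gap_le: "norm v \<le> norm m0 - gap" if "poly (fc_poly p z0) v = 0" "v \<noteq> m0" for v
  proof -
    have "gap \<le> norm m0 - norm v" unfolding gap_def using fin that by (intro Min_le) (auto simp: others_def)
    then show ?thesis by simp
  qed
  have m0: "m0 ^ (p - 1) * (1 - m0) = z0" using dominant_root(1)[OF p z0] m0_def by simp
  have deg: "degree (fc_poly p z) = p" "lead_coeff (fc_poly p z) = 1" "degree (fc_poly p z) > 0" for z
    using degree_fc_poly[OF p] p by auto
  obtain d0 where d0: "d0 > 0" "ball z0 d0 \<subseteq> FC_dom p" by (rule openE[OF open_FC_dom z0])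
  show ?thesis unfolding continuous_at_eps_delta
  proof (intro allI impI)
    fix e :: real assume e: "e > 0"
    define \<tau> where "\<tau> = min (gap / 3) e"
    have \<tau>: "\<tau> > 0" "\<tau> \<le> gap / 3" "\<tau> \<le> e" using gap_pos e \<tau>_def by auto
    show "\<exists>d>0. \<forall>y. dist y z0 < d \<longrightarrow> dist (dominant_root p y) (dominant_root p z0) < e"
    proof (intro exI[of _ "min d0 (\<tau> ^ p)"] conjI allI impI)
      show "min d0 (\<tau> ^ p) > 0" using d0 \<tau> by simp
      fix y assume y: "dist y z0 < min d0 (\<tau> ^ p)"
      have yD: "y \<in> FC_dom p" using y d0 by (auto simp: dist_commute)
      have dy: "norm (y - z0) < \<tau> ^ p" "norm (z0 - y) < \<tau> ^ p"
        using y by (simp_all add: dist_norm norm_minus_commute)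
      define my where "my = dominant_root p y"
      have my: "my ^ (p - 1) * (1 - my) = y" using dominant_root(1)[OF p yD] my_def by simp
      obtain r where "poly (fc_poly p y) r = 0"
        "norm (m0 - r) ^ degree (fc_poly p y) \<le> norm (poly (fc_poly p y) m0)"
        by (rule monic_poly_root_near[OF deg(2,3)])
      then have r: "poly (fc_poly p y) r = 0" "norm (m0 - r) ^ p \<le> norm (y - z0)"
        using m0 deg(1) by (simp_all add: poly_fc_poly)
      have "norm (m0 - r) ^ p < \<tau> ^ p" using r(2) dy by linarith
      then have "norm (m0 - r) < \<tau>" by (rule power_less_imp_less_base) (use \<tau> in simp)
      moreover have "norm r \<le> norm my" using dominant_root(3)[OF p yD r(1)] my_def by force
      ultimately have low: "norm my > norm m0 - \<tau>" using norm_triangle_ineq2[of m0 r] by simp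
      obtain s where "poly (fc_poly p z0) s = 0"
        "norm (my - s) ^ degree (fc_poly p z0) \<le> norm (poly (fc_poly p z0) my)"
        by (rule monic_poly_root_near[OF deg(2,3)])
      then have s: "poly (fc_poly p z0) s = 0" "norm (my - s) ^ p \<le> norm (z0 - y)"
        using my deg(1) by (simp_all add: poly_fc_poly)
      have "norm (my - s) ^ p < \<tau> ^ p" using s(2) dy by linarith
      then have ms: "norm (my - s) < \<tau>" by (rule power_less_imp_less_base) (use \<tau> in simp)
      have "s = m0"
      proof (rule ccontr)
        assume "s \<noteq> m0"
        then have "norm s \<le> norm m0 - gap" using gap_le s(1) by simp
        then show False using low ms \<tau> norm_triangle_ineq2[of my s] by simp
      qed
      then show "dist (dominant_root p y) (dominant_root p z0) < e"
        using ms \<tau> my_def m0_def by (simp add: dist_norm)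
    qed
  qed
qed

lemma has_field_derivative_fc_root_map:
  assumes "p \<ge> 2"
  shows "((\<lambda>w. w ^ (p - 1) * (1 - w)) has_field_derivative
           w ^ (p - 2) * (of_nat (p - 1) - of_nat p * w)) (at w)"
proof -
  obtain k where k: "p = Suc (Suc k)" using assms by (metis add_2_eq_Suc le_Suc_ex)
  have "((\<lambda>w. w ^ Suc k * (1 - w)) has_field_derivative
          of_nat (Suc k) * w ^ (Suc k - 1) * (1 - w) + w ^ Suc k * (0 - 1)) (at w)"
    by (intro derivative_eq_intros) auto
  then show ?thesis unfolding k by (simp add: algebra_simps)
qed

text \<open>The derivative w^(p-2) ((p-1) - p w) vanishes only at 0 and at (p-1)/p, whose image
  is the branch point.\<close>

lemma fc_root_map_deriv_nonzero:
  assumes p: "p \<ge> 2" and z: "z \<in> FC_dom p"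
  shows "dominant_root p z ^ (p - 2) * (of_nat (p - 1) - of_nat p * dominant_root p z) \<noteq> 0"
proof
  define M where "M = dominant_root p z"
  assume "M ^ (p - 2) * (of_nat (p - 1) - of_nat p * M) = 0"
  then have "of_nat (p - 1) = of_nat p * M" using dominant_root_nonzero[OF p z] M_def by simp
  then have "M = of_real ((real p - 1) / real p)" using p by (simp add: field_simps of_nat_diff)
  then have "z = of_real (((real p - 1) / real p) ^ (p - 1) * (1 - (real p - 1) / real p))"
    using dominant_root(1)[OF p z] M_def by simp
  then show False using z fc_branch_point_eq[OF p] by (simp add: FC_dom_iff)
qed

lemma dominant_root_has_field_derivative:
  assumes p: "p \<ge> 2" and z: "z \<in> FC_dom p"
  shows "(dominant_root p has_field_derivative
           inverse (dominant_root p z ^ (p - 2) * (of_nat (p - 1) - of_nat p * dominant_root p z))) (at z)"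
  by (rule has_field_derivative_inverse_basic[OF has_field_derivative_fc_root_map[OF p]
        fc_root_map_deriv_nonzero[OF p z] continuous_at_dominant_root[OF p z] open_FC_dom z])
     (use dominant_root(1)[OF p] in blast)

definition inv_dominant_root :: "nat \<Rightarrow> complex \<Rightarrow> complex" where
  "inv_dominant_root p z = (if z \<in> FC_dom p then inverse (dominant_root p z) else 0)"

lemma inv_dominant_root_holomorphic:
  assumes p: "p \<ge> 2"
  shows "inv_dominant_root p holomorphic_on FC_dom p"
proof -
  have "(\<lambda>z. inverse (dominant_root p z)) holomorphic_on FC_dom p"
    unfolding holomorphic_on_open[OF open_FC_dom]
    using DERIV_inverse_fun[OF dominant_root_has_field_derivative[OF p] dominant_root_nonzero[OF p]]
    by blast
  then show ?thesis by (rule holomorphic_transform) (simp add: inv_dominant_root_def)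
qed

lemma inv_dominant_root_0: "p \<ge> 2 \<Longrightarrow> inv_dominant_root p 0 = 1"
  using dominant_root_0 zero_in_FC_dom by (simp add: inv_dominant_root_def)

lemma inv_dominant_root_equation:
  assumes p: "p \<ge> 2" and z: "z \<in> FC_dom p"
  shows "z * inv_dominant_root p z ^ p - inv_dominant_root p z + 1 = 0"
proof -
  define M where "M = dominant_root p z"
  have "M \<noteq> 0" using dominant_root_nonzero[OF p z] M_def by simp
  moreover have "M ^ p = M ^ (p - 1) * M" using p by (intro power_eq_power_pred_mult) simp
  moreover have "z = M ^ (p - 1) * (1 - M)" using dominant_root(1)[OF p z] M_def by simp
  ultimately show ?thesis using z by (simp add: inv_dominant_root_def M_def[symmetric] field_simps power_inverse)
qed

lemma norm_inv_dominant_root_le: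
  assumes p: "p \<ge> 2"
  shows "norm (inv_dominant_root p z) \<le> 2"
proof (cases "z \<in> FC_dom p")
  case True
  then have "inverse (norm (dominant_root p z)) \<le> inverse (1 / 2)"
    using dominant_root(2)[OF p] by (intro le_imp_inverse_le) auto
  then show ?thesis using True by (simp add: inv_dominant_root_def norm_inverse)
qed (simp add: inv_dominant_root_def)

text \<open>Near 0, the difference of two solutions is annihilated by z \<Sum> T1^i T2^(p-1-i) - 1,
  which is close to -1.\<close>

lemma fc_solutions_agree_near_0:
  fixes T1 T2 :: "complex \<Rightarrow> complex"
  assumes S: "open S" "0 \<in> S" and c: "isCont T1 0" "isCont T2 0"
    and e1: "\<And>z. z \<in> S \<Longrightarrow> z * T1 z ^ p - T1 z + 1 = 0"
    and e2: "\<And>z. z \<in> S \<Longrightarrow> z * T2 z ^ p - T2 z + 1 = 0"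
  obtains r where "r > 0" "ball 0 r \<subseteq> S" "\<And>z. z \<in> ball 0 r \<Longrightarrow> T1 z = T2 z"
proof -
  define h where "h z = z * (\<Sum>i<p. T2 z ^ (p - Suc i) * T1 z ^ i) - 1" for z
  have "isCont h 0" unfolding h_def by (intro continuous_intros c)
  moreover have "h 0 \<noteq> 0" by (simp add: h_def)
  ultimately obtain e where e: "e > 0" "\<And>y. dist 0 y < e \<Longrightarrow> h y \<noteq> 0"
    using continuous_at_avoid by blast
  obtain d where d: "d > 0" "ball 0 d \<subseteq> S" using S openE by blast
  show ?thesis
  proof (rule that[of "min e d"])
    fix z :: complex assume z: "z \<in> ball 0 (min e d)"
    then have "z \<in> S" using d by auto
    have "0 = (z * T1 z ^ p - T1 z + 1) - (z * T2 z ^ p - T2 z + 1)"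
      using e1[OF \<open>z \<in> S\<close>] e2[OF \<open>z \<in> S\<close>] by simp
    also have "\<dots> = z * (T1 z ^ p - T2 z ^ p) - (T1 z - T2 z)" by (simp add: algebra_simps)
    also have "\<dots> = (T1 z - T2 z) * h z" unfolding h_def power_diff_sumr2 by (simp add: algebra_simps)
    finally show "T1 z = T2 z" using z e by auto
  qed (use e d in auto)
qed

lemma FussCatalan_eq_inv_dominant_root:
  assumes p: "p \<ge> 2"
  shows "FussCatalan p = inv_dominant_root p"
  unfolding FussCatalan_def
proof (rule the_equality)
  show "inv_dominant_root p holomorphic_on FC_dom p \<and> inv_dominant_root p 0 = 1 \<and>
      (\<forall>z\<in>FC_dom p. z * inv_dominant_root p z ^ p - inv_dominant_root p z + 1 = 0) \<and>
      (\<forall>z. z \<notin> FC_dom p \<longrightarrow> inv_dominant_root p z = 0)"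
    using inv_dominant_root_holomorphic inv_dominant_root_0 inv_dominant_root_equation p
    by (simp add: inv_dominant_root_def)
  fix T assume T: "T holomorphic_on FC_dom p \<and> T 0 = 1 \<and>
      (\<forall>z\<in>FC_dom p. z * T z ^ p - T z + 1 = 0) \<and> (\<forall>z. z \<notin> FC_dom p \<longrightarrow> T z = 0)"
  have cont: "isCont F 0" if "F holomorphic_on FC_dom p" for F
    using that zero_in_FC_dom[OF p] open_FC_dom
    by (meson continuous_on_eq_continuous_at holomorphic_on_imp_continuous_on)
  obtain r where r: "r > 0" "ball 0 r \<subseteq> FC_dom p" "\<And>z. z \<in> ball 0 r \<Longrightarrow> T z = inv_dominant_root p z"
    using fc_solutions_agree_near_0[OF open_FC_dom zero_in_FC_dom[OF p],
        of T "inv_dominant_root p"] T cont inv_dominant_root_holomorphic[OF p]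
      inv_dominant_root_equation[OF p]
    by metis
  show "T = inv_dominant_root p"
  proof
    fix z show "T z = inv_dominant_root p z"
    proof (cases "z \<in> FC_dom p")
      case True
      show ?thesis
        by (rule analytic_continuation_open[of "ball 0 r" "FC_dom p" T "inv_dominant_root p" z])
           (use r T inv_dominant_root_holomorphic[OF p] True open_FC_dom
              starlike_imp_connected[OF starlike_FC_dom[OF p]] in auto)
    qed (use T in \<open>simp add: inv_dominant_root_def\<close>)
  qed
qed

section \<open>Pointwise bound on g\<close>

lemma norm_csqrt_minus_one_le: "norm (csqrt T - 1) \<le> norm (T - 1)"
proof -
  have "1 \<le> Re (csqrt T + 1)" using Re_csqrt[of T] by simp
  also have "\<dots> \<le> norm (csqrt T + 1)" by (rule complex_Re_le_cmod)
  finally have "norm (csqrt T - 1) * 1 \<le> norm (csqrt T - 1) * norm (csqrt T + 1)"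
    by (intro mult_left_mono) auto
  also have "\<dots> = norm (T - 1)"
    using power2_csqrt[of T] by (simp flip: norm_mult add: algebra_simps power2_eq_square)
  finally show ?thesis by simp
qed

definition fc_sqrt_const :: "nat \<Rightarrow> real" where
  "fc_sqrt_const p = max (2 ^ p) (1 / fc_branch_point p)"

lemma fc_sqrt_const_ge_one: "1 \<le> fc_sqrt_const p"
  by (simp add: fc_sqrt_const_def le_max_iff_disj)

text \<open>Off the domain of definition the Fuss--Catalan function is 0 by convention, but
  there |z| is at least the branch point, so the bound still holds.\<close>

lemma norm_csqrt_FussCatalan_minus_one_le:
  assumes p: "p \<ge> 2"
  shows "norm (csqrt (FussCatalan p z) - 1) \<le> fc_sqrt_const p * min (norm z) 1"
proof (cases "z \<in> FC_dom p")
  case True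
  define T where "T = FussCatalan p z"
  have T: "norm T \<le> 2" "T - 1 = z * T ^ p"
    using norm_inv_dominant_root_le[OF p] inv_dominant_root_equation[OF p True]
    by (simp_all add: T_def FussCatalan_eq_inv_dominant_root[OF p] algebra_simps)
  have four: "4 \<le> (2::real) ^ p" using power_increasing[OF p, of "2::real"] by simp
  have "norm (csqrt T - 1) \<le> norm (T - 1)" by (rule norm_csqrt_minus_one_le)
  also have "\<dots> = norm z * norm T ^ p" using T(2) by (simp add: norm_mult norm_power)
  also have "\<dots> \<le> norm z * 2 ^ p" using T(1) by (intro mult_left_mono power_mono) auto
  finally have near: "norm (csqrt T - 1) \<le> 2 ^ p * norm z" by (simp add: mult.commute)
  have "norm (csqrt T - 1) \<le> sqrt (norm T) + 1" using norm_triangle_ineq4[of "csqrt T" 1] by simp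
  also have "\<dots> \<le> 2 ^ p" using T(1) four by (smt (verit) real_sqrt_le_iff real_sqrt_four)
  finally have "norm (csqrt T - 1) \<le> 2 ^ p * min (norm z) 1" using near by (simp add: min_def)
  also have "\<dots> \<le> fc_sqrt_const p * min (norm z) 1"
    unfolding fc_sqrt_const_def by (intro mult_right_mono) auto
  finally show ?thesis by (simp add: T_def)
next
  case False
  have "FussCatalan p z = 0"
    using False by (simp add: FussCatalan_eq_inv_dominant_root[OF p] inv_dominant_root_def)
  moreover have "Re z \<ge> fc_branch_point p" using False by (simp add: FC_dom_iff)
  then have "norm z \<ge> fc_branch_point p" using abs_Re_le_cmod[of z] by linarith
  then have "1 \<le> fc_sqrt_const p * min (norm z) 1"
  proof (cases "norm z \<le> 1")
    case True
    have "1 = (1 / fc_branch_point p) * fc_branch_point p" using fc_branch_point_pos[OF p] by simp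
    also have "\<dots> \<le> max (2 ^ p) (1 / fc_branch_point p) * norm z"
      using fc_branch_point_pos[OF p] \<open>norm z \<ge> fc_branch_point p\<close>
      by (intro mult_mono) (auto simp: le_max_iff_disj)
    finally show ?thesis using True by (simp add: fc_sqrt_const_def)
  next
    case False
    then show ?thesis using fc_sqrt_const_ge_one by simp
  qed
  ultimately show ?thesis by simp
qed

lemma min_one_le_powr:
  fixes x b :: real
  assumes "0 \<le> x" "0 < b" "b \<le> 1"
  shows "min x 1 \<le> x powr b"
proof (cases "x \<le> 1")
  case True
  then show ?thesis using assms powr_mono'[of b 1 x] by (cases "x = 0") auto
qed (use assms in \<open>simp add: ge_one_powr_ge_zero\<close>)

lemma g_lam_eq: "g_lam p lam u = u * (csqrt (FussCatalan p (- lam * u ^ (2 * p - 2))) - 1)"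
  by (simp add: g_lam_def h_lam_def f_lam_def algebra_simps)

text \<open>With b = 1/(4p^2): |g(u)| \<le> A r (|\<lambda>| r^(2p-2))^b for r = |u|, and
  1 + b(2p-2) - (2 + 1/p) = -(1 + (p+1)/(2p^2)).\<close>

lemma g_lam_weighted_le:
  assumes p: "p \<ge> 2"
  shows "norm (g_lam p lam u) * (1 / (1 + norm u)) powr (2 + 1 / real p)
    \<le> fc_sqrt_const p * norm lam powr (1 / (4 * real p ^ 2))
       * (1 + norm u) powr (- (1 + (real p + 1) / (2 * real p ^ 2)))"
proof (cases "u = 0")
  case True
  then show ?thesis using fc_sqrt_const_ge_one[of p] by (simp add: g_lam_eq)
next
  case False
  define r where "r = norm u"
  define L where "L = norm lam"
  define b where "b = 1 / (4 * real p ^ 2)"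
  define A where "A = fc_sqrt_const p"
  have r: "r > 0" using False r_def by simp
  have L: "L \<ge> 0" using L_def by simp
  have A: "A \<ge> 0" unfolding A_def using fc_sqrt_const_ge_one[of p] by simp
  have "1 \<le> 4 * real p ^ 2" using p power_mono[of 2 "real p" 2] by simp
  then have b: "0 < b" "b \<le> 1" unfolding b_def using p by (simp_all add: divide_le_eq)
  define z where "z = - lam * u ^ (2 * p - 2)"
  have nz: "norm z = L * r ^ (2 * p - 2)" unfolding z_def L_def r_def by (simp add: norm_mult norm_power)
  have "norm (csqrt (FussCatalan p z) - 1) \<le> A * min (norm z) 1"
    unfolding A_def by (rule norm_csqrt_FussCatalan_minus_one_le[OF p])
  then have "norm (g_lam p lam u) \<le> r * (A * min (norm z) 1)"
    unfolding g_lam_eq z_def[symmetric] norm_mult r_def by (intro mult_left_mono) auto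
  also have "\<dots> \<le> r * (A * norm z powr b)"
    using min_one_le_powr[of "norm z" b] b A r by (intro mult_left_mono) auto
  also have "norm z powr b = L powr b * r powr (b * (2 * p - 2))"
    unfolding nz using L r by (simp add: powr_mult powr_realpow[symmetric] powr_powr mult.commute)
  also have "r * (A * (L powr b * r powr (b * (2 * p - 2))))
      \<le> (1 + r) powr 1 * (A * (L powr b * (1 + r) powr (b * (2 * p - 2))))"
    using r b A L by (intro mult_mono powr_mono2) auto
  also have "\<dots> = A * L powr b * (1 + r) powr (1 + b * (2 * p - 2))"
    by (simp add: powr_add)
  finally have g: "norm (g_lam p lam u) \<le> A * L powr b * (1 + r) powr (1 + b * (2 * p - 2))" .
  have weight: "(1 / (1 + r)) powr (2 + 1 / real p) = (1 + r) powr (- (2 + 1 / real p))"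
    using r by (simp only: powr_minus_divide powr_divide powr_one_eq_one)
  have exponent: "1 + b * real (2 * p - 2) + - (2 + 1 / real p) = - (1 + (real p + 1) / (2 * real p ^ 2))"
    unfolding b_def using p by (simp add: of_nat_diff field_simps power2_eq_square)
  have "norm (g_lam p lam u) * (1 / (1 + r)) powr (2 + 1 / real p)
     \<le> A * L powr b * (1 + r) powr (1 + b * (2 * p - 2)) * (1 + r) powr (- (2 + 1 / real p))"
    unfolding weight using g by (intro mult_right_mono) auto
  also have "\<dots> = A * L powr b * (1 + r) powr (- (1 + (real p + 1) / (2 * real p ^ 2)))"
    using exponent by (simp add: powr_add[symmetric] mult.assoc)
  finally show ?thesis unfolding r_def L_def b_def A_def .
qed

section \<open>Arc-length integrals along the keyhole\<close>

lemma has_vector_derivative_joinpaths_left: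
  assumes "0 \<le> t" "2 * t < 1" "g1 differentiable at (2 * t)"
  shows "((g1 +++ g2) has_vector_derivative 2 *\<^sub>R vector_derivative g1 (at (2 * t))) (at t)"
proof (rule has_vector_derivative_transform_within)
  have "((*) 2 has_vector_derivative 2) (at t)"
    by (simp add: has_vector_derivative_def has_derivative_def bounded_linear_mult_left)
  moreover have "(g1 has_vector_derivative vector_derivative g1 (at (2 * t))) (at (2 * t))"
    using assms by (auto simp: mult.commute vector_derivative_works)
  ultimately show "((\<lambda>x. g1 (2 * x)) has_vector_derivative 2 *\<^sub>R vector_derivative g1 (at (2 * t))) (at t)"
    by (intro vector_diff_chain_at [simplified o_def])
  show "0 < \<bar>t - 1 / 2\<bar>" using assms by auto
qed (use assms in \<open>simp_all add: joinpaths_def dist_real_def abs_if split: if_split_asm\<close>)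

lemma has_vector_derivative_joinpaths_right:
  assumes "1 < 2 * t" "t \<le> 1" "g2 differentiable at (2 * t - 1)"
  shows "((g1 +++ g2) has_vector_derivative 2 *\<^sub>R vector_derivative g2 (at (2 * t - 1))) (at t)"
proof (rule has_vector_derivative_transform_within)
  have "((\<lambda>x. 2 * x - 1) has_vector_derivative 2) (at t)"
    by (simp add: has_vector_derivative_def has_derivative_def bounded_linear_mult_left)
  moreover have "(g2 has_vector_derivative vector_derivative g2 (at (2 * t - 1))) (at (2 * t - 1))"
    using assms by (auto simp: mult.commute vector_derivative_works)
  ultimately show "((\<lambda>x. g2 (2 * x - 1)) has_vector_derivative 2 *\<^sub>R vector_derivative g2 (at (2 * t - 1))) (at t)"
    by (intro vector_diff_chain_at [simplified o_def])
  show "0 < \<bar>t - 1 / 2\<bar>" using assms by auto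
qed (use assms in \<open>simp_all add: joinpaths_def dist_real_def abs_if split: if_split_asm\<close>)

definition differentiable_off_finite :: "(real \<Rightarrow> complex) \<Rightarrow> bool" where
  "differentiable_off_finite g \<longleftrightarrow> (\<exists>S. finite S \<and> (\<forall>t\<in>{0..1} - S. g differentiable at t))"

lemma differentiable_off_finite_joinpaths:
  assumes "differentiable_off_finite g1" "differentiable_off_finite g2"
  shows "differentiable_off_finite (g1 +++ g2)"
proof -
  obtain S1 S2 where S1: "finite S1" "\<forall>t\<in>{0..1} - S1. g1 differentiable at t"
    and S2: "finite S2" "\<forall>t\<in>{0..1} - S2. g2 differentiable at t"
    using assms unfolding differentiable_off_finite_def by blast
  define E where "E = {1/2} \<union> ((*) 2 -` S1) \<union> ((\<lambda>t. 2 * t - 1) -` S2)"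
  have "finite E" unfolding E_def using S1 S2 by (auto intro!: finite_vimageI inj_onI)
  moreover have "(g1 +++ g2) differentiable at t" if t: "t \<in> {0..1} - E" for t
  proof (cases "2 * t < 1")
    case True
    with t have "g1 differentiable at (2 * t)" using S1(2) by (simp add: E_def)
    with True t show ?thesis
      using has_vector_derivative_joinpaths_left differentiableI_vector by (metis DiffD1 atLeastAtMost_iff)
  next
    case False
    with t have "1 < 2 * t" by (auto simp: E_def)
    with t have "g2 differentiable at (2 * t - 1)" using S2(2) by (simp add: E_def)
    with \<open>1 < 2 * t\<close> t show ?thesis
      using has_vector_derivative_joinpaths_right differentiableI_vector by (metis DiffD1 atLeastAtMost_iff)
  qed
  ultimately show ?thesis unfolding differentiable_off_finite_def by blast
qed

definition arclength_density ::
    "(complex \<Rightarrow> real) \<Rightarrow> (real \<Rightarrow> complex) \<Rightarrow> real \<Rightarrow> real" where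
  "arclength_density K g t = K (g t) * norm (vector_derivative g (at t))"

lemma has_integral_arclength_density_joinpaths:
  assumes i1: "(arclength_density K g1 has_integral i1) {0..1}"
    and i2: "(arclength_density K g2 has_integral i2) {0..1}"
    and d: "differentiable_off_finite g1" "differentiable_off_finite g2"
  shows "(arclength_density K (g1 +++ g2) has_integral (i1 + i2)) {0..1}"
proof -
  obtain S1 S2 where S1: "finite S1" "\<forall>t\<in>{0..1} - S1. g1 differentiable at t"
    and S2: "finite S2" "\<forall>t\<in>{0..1} - S2. g2 differentiable at t"
    using d unfolding differentiable_off_finite_def by blast
  have j1: "((\<lambda>t. 2 * arclength_density K g1 (2 * t)) has_integral i1) {0..1/2}"
   and j2: "((\<lambda>t. 2 * arclength_density K g2 (2 * t - 1)) has_integral i2) {1/2..1}"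
    using has_integral_affinity01 [OF i1, where m= 2 and c=0, THEN has_integral_cmul [where c=2]]
          has_integral_affinity01 [OF i2, where m= 2 and c="-1", THEN has_integral_cmul [where c=2]]
    by (simp_all only: image_affinity_atLeastAtMost_div_diff, simp_all add: mult_ac)
  have "(arclength_density K (g1 +++ g2) has_integral i1) {0..1/2}"
  proof (rule has_integral_spike_finite [OF _ _ j1])
    show "finite (insert (1/2) ((*) 2 -` S1))"
      using S1 by (force intro: finite_vimageI [where h = "(*)2"] inj_onI)
    fix t assume t: "t \<in> {0..1/2} - insert (1/2) ((*) 2 -` S1)"
    then have "vector_derivative (g1 +++ g2) (at t) = 2 *\<^sub>R vector_derivative g1 (at (2 * t))"
      using has_vector_derivative_joinpaths_left[of t g1 g2] S1
      by (intro vector_derivative_at) (auto simp: mult.commute)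
    then show "arclength_density K (g1 +++ g2) t = 2 * arclength_density K g1 (2 * t)"
      using t by (simp add: arclength_density_def joinpaths_def mult.commute)
  qed
  moreover have "(arclength_density K (g1 +++ g2) has_integral i2) {1/2..1}"
  proof (rule has_integral_spike_finite [OF _ _ j2])
    show "finite (insert (1/2) ((\<lambda>t. 2 * t - 1) -` S2))"
      using S2 by (force intro: finite_vimageI [where h = "\<lambda>t. 2 * t - 1"] inj_onI)
    fix t assume t: "t \<in> {1/2..1} - insert (1/2) ((\<lambda>t. 2 * t - 1) -` S2)"
    then have "vector_derivative (g1 +++ g2) (at t) = 2 *\<^sub>R vector_derivative g2 (at (2 * t - 1))"
      using has_vector_derivative_joinpaths_right[of t g2 g1] S2
      by (intro vector_derivative_at) (auto simp: mult.commute)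
    then show "arclength_density K (g1 +++ g2) t = 2 * arclength_density K g2 (2 * t - 1)"
      using t by (simp add: arclength_density_def joinpaths_def mult.commute)
  qed
  ultimately show ?thesis by (simp add: has_integral_combine [where c = "1/2"])
qed

definition arclength_le :: "(complex \<Rightarrow> real) \<Rightarrow> (real \<Rightarrow> complex) \<Rightarrow> real \<Rightarrow> bool"
  where
  "arclength_le K g B \<longleftrightarrow> differentiable_off_finite g \<and>
     (\<exists>I. (arclength_density K g has_integral I) {0..1} \<and> I \<le> B)"

lemma arclength_le_joinpaths:
  "arclength_le K g1 B1 \<Longrightarrow> arclength_le K g2 B2 \<Longrightarrow> arclength_le K (g1 +++ g2) (B1 + B2)"
  unfolding arclength_le_def
  using differentiable_off_finite_joinpaths has_integral_arclength_density_joinpaths add_mono by metis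

lemma arclength_le_mono: "arclength_le K g B \<Longrightarrow> B \<le> B' \<Longrightarrow> arclength_le K g B'"
  unfolding arclength_le_def by force

lemma arclength_integral_le:
  assumes "arclength_le K g B" and "\<And>u. F u \<le> K u" and "0 \<le> B"
  shows "arclength_integral F g \<le> B"
proof -
  obtain I where I: "(arclength_density K g has_integral I) {0..1}" "I \<le> B"
    using assms(1) unfolding arclength_le_def by blast
  have "integral {0..1} (arclength_density F g) \<le> B"
  proof (cases "arclength_density F g integrable_on {0..1}")
    case True
    have "integral {0..1} (arclength_density F g) \<le> I"
      using True I(1) assms(2)
      by (intro has_integral_le[OF integrable_integral]) (auto simp: arclength_density_def mult_right_mono)
    then show ?thesis using I(2) by simp
  qed (use assms(3) in \<open>simp add: not_integrable_integral\<close>)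
  then show ?thesis unfolding arclength_integral_def arclength_density_def .
qed

text \<open>An antiderivative is -sgn(y - x) h(s)^(-e) / e with h(s) = 1 + (1 - s) x + s y \<ge> 1,
  and h^(-e) takes values in [0, 1].\<close>

lemma radial_segment_integral_le:
  fixes x y e :: real
  assumes x: "x \<ge> 0" and y: "y \<ge> 0" and e: "e > 0"
  obtains I where "((\<lambda>s. (1 + ((1 - s) * x + s * y)) powr (- (1 + e)) * \<bar>y - x\<bar>) has_integral I) {0..1}"
    "I \<le> 1 / e"
proof -
  define h where "h s = 1 + ((1 - s) * x + s * y)" for s
  define \<sigma> where "\<sigma> = (if x \<le> y then 1 else -1::real)"
  define \<Phi> where "\<Phi> s = - \<sigma> / e * h s powr (- e)" for s
  have h1: "h s \<ge> 1" if "s \<in> {0..1}" for s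
    using that x y unfolding h_def by (auto intro!: add_nonneg_nonneg mult_nonneg_nonneg)
  have "(\<Phi> has_vector_derivative (h s powr (- (1 + e)) * \<bar>y - x\<bar>)) (at s within {0..1})"
    if s: "s \<in> {0..1}" for s
  proof -
    have "(h has_real_derivative (y - x)) (at s)" unfolding h_def by (auto intro!: derivative_eq_intros)
    from DERIV_fun_powr[OF this, of "- e"] h1[OF s]
    have "(\<Phi> has_real_derivative (- \<sigma> / e) * (- e * h s powr (- e - 1) * (y - x))) (at s)"
      unfolding \<Phi>_def by (intro DERIV_cmult) simp
    moreover have "(- \<sigma> / e) * (- e * h s powr (- e - 1) * (y - x)) = h s powr (- (1 + e)) * \<bar>y - x\<bar>"
    proof -
      have key: "(- \<sigma> / e) * (- e * P * (y - x)) = P * \<bar>y - x\<bar>" for P using e by (simp add: \<sigma>_def)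
      have "- e - 1 = - (1 + e)" by simp
      then show ?thesis using key[of "h s powr (- (1 + e))"] by (simp only:)
    qed
    ultimately have "(\<Phi> has_real_derivative h s powr (- (1 + e)) * \<bar>y - x\<bar>) (at s)" by simp
    then show ?thesis
      using has_real_derivative_iff_has_vector_derivative has_vector_derivative_at_within by blast
  qed
  then have "((\<lambda>s. h s powr (- (1 + e)) * \<bar>y - x\<bar>) has_integral (\<Phi> 1 - \<Phi> 0)) {0..1}"
    by (intro fundamental_theorem_of_calculus) auto
  moreover have "\<Phi> 1 - \<Phi> 0 \<le> 1 / e"
  proof -
    have "h s powr (- e) \<le> 1" if "s \<in> {0..1}" for s
      using h1[OF that] e by (simp add: powr_minus_divide divide_le_eq ge_one_powr_ge_zero)
    then have "\<bar>h 0 powr (- e) - h 1 powr (- e)\<bar> \<le> 1"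
      unfolding abs_le_iff using powr_ge_zero[of "h 0" "- e"] powr_ge_zero[of "h 1" "- e"]
      by (smt (verit) atLeastAtMost_iff zero_le_one)
    then have "\<sigma> * (h 0 powr (- e) - h 1 powr (- e)) \<le> 1"
      unfolding \<sigma>_def by (auto simp: abs_le_iff)
    then have "\<sigma> * (h 0 powr (- e) - h 1 powr (- e)) / e \<le> 1 / e"
      using e by (intro divide_right_mono) auto
    moreover have "\<Phi> 1 - \<Phi> 0 = \<sigma> * (h 0 powr (- e) - h 1 powr (- e)) / e"
      unfolding \<Phi>_def by (simp add: diff_divide_distrib algebra_simps)
    ultimately show ?thesis by simp
  qed
  ultimately show ?thesis using that unfolding h_def by blast
qed

lemma arclength_le_radial_linepath:
  fixes D e x y :: real and a :: complex
  assumes D: "D \<ge> 0" and e: "e > 0" and x: "x \<ge> 0" and y: "y \<ge> 0" and a: "norm a = 1"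
  shows "arclength_le (\<lambda>u. D * (1 + norm u) powr (- (1 + e))) (linepath (of_real x * a) (of_real y * a)) (D / e)"
proof -
  define g where "g = linepath (of_real x * a) (of_real y * a)"
  have "arclength_density (\<lambda>u. D * (1 + norm u) powr (- (1 + e))) g s
      = D * ((1 + ((1 - s) * x + s * y)) powr (- (1 + e)) * \<bar>y - x\<bar>)" if s: "s \<in> {0..1}" for s
  proof -
    have "g s = of_real ((1 - s) * x + s * y) * a"
      unfolding g_def linepath_def by (simp add: scaleR_conv_of_real algebra_simps)
    moreover have "(1 - s) * x + s * y \<ge> 0" using s x y by (auto intro!: add_nonneg_nonneg mult_nonneg_nonneg)
    ultimately have "norm (g s) = (1 - s) * x + s * y" using a by (simp only: norm_mult norm_of_real) simp
    moreover have "vector_derivative g (at s) = of_real (y - x) * a"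
      unfolding g_def by (simp add: algebra_simps)
    then have "norm (vector_derivative g (at s)) = \<bar>y - x\<bar>" using a by (simp only: norm_mult norm_of_real) simp
    ultimately show ?thesis by (simp add: arclength_density_def)
  qed
  moreover obtain I where I: "((\<lambda>s. (1 + ((1 - s) * x + s * y)) powr (- (1 + e)) * \<bar>y - x\<bar>) has_integral I) {0..1}"
    "I \<le> 1 / e"
    using radial_segment_integral_le[OF x y e] .
  ultimately have "(arclength_density (\<lambda>u. D * (1 + norm u) powr (- (1 + e))) g has_integral D * I) {0..1}"
    by (intro has_integral_eq[rotated, OF has_integral_mult_right[OF I(1)]]) simp
  moreover have "D * I \<le> D / e" using mult_left_mono[OF I(2) D] by simp
  moreover have "differentiable_off_finite g" unfolding g_def differentiable_off_finite_def by auto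
  ultimately show ?thesis unfolding arclength_le_def g_def by blast
qed

lemma arclength_le_part_circlepath:
  fixes D e r s t :: real
  assumes D: "D \<ge> 0" and e: "e > 0" and r: "r \<ge> 0"
  shows "arclength_le (\<lambda>u. D * (1 + norm u) powr (- (1 + e))) (part_circlepath 0 r s t) (D * \<bar>t - s\<bar>)"
proof -
  define K where "K = (\<lambda>u::complex. D * (1 + norm u) powr (- (1 + e)))"
  define c where "c = D * (1 + r) powr (- (1 + e)) * (r * \<bar>t - s\<bar>)"
  have density: "arclength_density K (part_circlepath 0 r s t) x = c" for x
  proof -
    have "norm (part_circlepath 0 r s t x) = r" using r
      by (simp add: part_circlepath_def norm_mult)
    moreover have "norm (vector_derivative (part_circlepath 0 r s t) (at x)) = r * \<bar>t - s\<bar>"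
      using r by (simp add: vector_derivative_part_circlepath norm_mult flip: of_real_diff)
    ultimately show ?thesis unfolding arclength_density_def K_def c_def by simp
  qed
  have I: "(arclength_density K (part_circlepath 0 r s t) has_integral c) {0..1}"
  proof -
    have "arclength_density K (part_circlepath 0 r s t) = (\<lambda>x. c)" using density by (rule ext)
    then show ?thesis using has_integral_const_real[of c 0 1] by simp
  qed
  have "(1 + r) powr (- (1 + e)) \<le> (1 + r) powr (-1)" using r e by (intro powr_mono) auto
  also have "\<dots> = 1 / (1 + r)" using r by (simp add: powr_minus_divide)
  finally have "(1 + r) powr (- (1 + e)) * r \<le> 1 / (1 + r) * r" using r by (intro mult_right_mono) auto
  also have "\<dots> \<le> 1" using r by (simp add: field_simps)
  finally have b: "(1 + r) powr (- (1 + e)) * r \<le> 1" .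
  have "c = D * \<bar>t - s\<bar> * ((1 + r) powr (- (1 + e)) * r)" unfolding c_def by (simp add: algebra_simps)
  also have "\<dots> \<le> D * \<bar>t - s\<bar> * 1" using D b by (intro mult_left_mono) auto
  finally have "c \<le> D * \<bar>t - s\<bar>" by simp
  moreover have "differentiable_off_finite (part_circlepath 0 r s t)"
    unfolding differentiable_off_finite_def using differentiable_part_circlepath[of 0 r s t _ UNIV] by auto
  ultimately show ?thesis unfolding arclength_le_def K_def[symmetric] using I by blast
qed

lemma arclength_le_keyhole:
  fixes D e R \<psi> :: real
  assumes D: "D \<ge> 0" and e: "e > 0" and R: "R \<ge> 0"
  shows "arclength_le (\<lambda>u. D * (1 + norm u) powr (- (1 + e))) (keyhole \<psi> R)
           (D * (4 / e + 2 * pi + 8 * \<bar>\<psi>\<bar>))"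
proof -
  define K where "K = (\<lambda>u::complex. D * (1 + norm u) powr (- (1 + e)))"
  have out: "arclength_le K (linepath (cis a) (of_real R * cis a)) (D / e)" for a
    using arclength_le_radial_linepath[OF D e _ R, of 1 "cis a"] unfolding K_def by simp
  have inw: "arclength_le K (linepath (of_real R * cis a) (cis a)) (D / e)" for a
    using arclength_le_radial_linepath[OF D e R, of 1 "cis a"] unfolding K_def by simp
  have arc: "arclength_le K (part_circlepath 0 r s t) (D * \<bar>t - s\<bar>)" if "r \<ge> 0" for r s t
    using arclength_le_part_circlepath[OF D e that] unfolding K_def by simp
  have pieces: "arclength_le K (keyhole \<psi> R)
     (D / e + (D * \<bar>\<psi> - - \<psi>\<bar> + (D / e + (D * \<bar>(pi - \<psi>) - \<psi>\<bar> + (D / e +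
       (D * \<bar>(pi + \<psi>) - (pi - \<psi>)\<bar> + (D / e + D * \<bar>(2 * pi - \<psi>) - (pi + \<psi>)\<bar>)))))))"
    (is "arclength_le _ _ ?B")
    unfolding keyhole_def by (intro arclength_le_joinpaths out inw arc R) simp_all
  have angles: "\<bar>\<psi> - - \<psi>\<bar> + \<bar>(pi - \<psi>) - \<psi>\<bar> + \<bar>(pi + \<psi>) - (pi - \<psi>)\<bar>
      + \<bar>(2 * pi - \<psi>) - (pi + \<psi>)\<bar> \<le> 2 * pi + 8 * \<bar>\<psi>\<bar>"
    using pi_gt_zero by linarith
  have "?B \<le> D * (4 / e + 2 * pi + 8 * \<bar>\<psi>\<bar>)"
    using mult_left_mono[OF angles D] by (simp add: algebra_simps)
  with pieces show ?thesis unfolding K_def by (rule arclength_le_mono)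
qed

theorem mainTheorem5:
  fixes p :: nat and \<epsilon> \<psi> \<eta> :: real
  assumes "p \<ge> 2" and "\<epsilon> > 0" and "\<eta> > 0"
    and "psi_ok p \<epsilon> \<psi>"
    and "\<forall>lam\<in>Pset \<epsilon> \<eta>. cut_radius p lam > 1"
  shows "\<exists>C. \<forall>R>1. \<forall>lam\<in>Pset \<epsilon> \<eta>.
           arclength_integral
             (\<lambda>u. cmod (g_lam p lam u) * (1 / (1 + cmod u)) powr (2 + 1 / real p))
             (keyhole \<psi> R)
           \<le> C * cmod lam powr (1 / (4 * real p ^ 2))"
proof -
  define e where "e = (real p + 1) / (2 * real p ^ 2)"
  have e: "e > 0" unfolding e_def using assms(1) by simp
  define W where "W = 4 / e + 2 * pi + 8 * \<bar>\<psi>\<bar>"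
  have W: "W \<ge> 0" unfolding W_def using e by simp
  have "arclength_integral
          (\<lambda>u. cmod (g_lam p lam u) * (1 / (1 + cmod u)) powr (2 + 1 / real p)) (keyhole \<psi> R)
        \<le> fc_sqrt_const p * W * cmod lam powr (1 / (4 * real p ^ 2))" if "R > 1" for R lam
  proof -
    define D where "D = fc_sqrt_const p * cmod lam powr (1 / (4 * real p ^ 2))"
    have D: "D \<ge> 0" unfolding D_def using fc_sqrt_const_ge_one[of p] by simp
    have "arclength_le (\<lambda>u. D * (1 + norm u) powr (- (1 + e))) (keyhole \<psi> R) (D * W)"
      unfolding W_def using arclength_le_keyhole[OF D e] that by simp
    then have "arclength_integral
          (\<lambda>u. cmod (g_lam p lam u) * (1 / (1 + cmod u)) powr (2 + 1 / real p)) (keyhole \<psi> R) \<le> D * W"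
      by (rule arclength_integral_le) (use g_lam_weighted_le[OF assms(1)] D W in \<open>simp_all add: D_def e_def\<close>)
    then show ?thesis by (simp add: D_def algebra_simps)
  qed
  then show ?thesis by blast
qed

end
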